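(* For $n\ge3$, $\mathfrak a_{15}(n)$ equals the real span of $\{iP\}$ over all length-$n$ Pauli strings $P\notin\{I^{\otimes n},X_1\}$ whose first tensor factor is $I$ or $X$. Consequently $\mathfrak a_{15}(n)\cong\mathfrak{su}(2^{n-1})\oplus\mathfrak{su}(2^{n-1})$.
   Context: Pauli matrices $I,X,Y,Z$; $X_1=X\otimes I^{\otimes(n-1)}$; $A_jB_{j+1}$ denotes the length-$n$ Pauli string with $A$ at position $j$, $B$ at $j+1$, $I$ elsewhere. $\mathfrak{su}(N)$ is the Lie algebra of traceless skew-Hermitian matrices; $\oplus$ denotes a direct sum of commuting subalgebras. For a set $S$ of Pauli strings, $\mathrm{Lie}\langle S\rangle$ is the smallest real Lie subalgebra of $\mathfrak u(2^n)$ containing $\{iP:P\in S\}$. $\mathfrak a_{15}(n)=\mathrm{Lie}\langle X_jX_{j+1},X_jY_{j+1},X_jZ_{j+1}:1\le j\le n-1\rangle$. *)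

theory Defs
  imports Complex_Main "Jordan_Normal_Form.Matrix"
begin

datatype pauli = PI | PX | PY | PZ

definition pauli_mat :: "pauli \<Rightarrow> complex mat" where
  "pauli_mat p = (case p of
      PI \<Rightarrow> mat 2 2 (\<lambda>(i,j). if i = j then 1 else 0)
    | PX \<Rightarrow> mat 2 2 (\<lambda>(i,j). if i \<noteq> j then 1 else 0)
    | PY \<Rightarrow> mat 2 2 (\<lambda>(i,j). if i = 0 \<and> j = 1 then - \<i> else if i = 1 \<and> j = 0 then \<i> else 0)
    | PZ \<Rightarrow> mat 2 2 (\<lambda>(i,j). if i = j then (if i = 0 then 1 else -1) else 0))"

text \<open>Kronecker (tensor) product; the first factor is the most significant one.\<close>
definition kron :: "complex mat \<Rightarrow> complex mat \<Rightarrow> complex mat" where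
  "kron A B = mat (dim_row A * dim_row B) (dim_col A * dim_col B)
     (\<lambda>(i,j). A $$ (i div dim_row B, j div dim_col B) * B $$ (i mod dim_row B, j mod dim_col B))"

definition pstring_mat :: "pauli list \<Rightarrow> complex mat" where
  "pstring_mat ps = foldr (\<lambda>p M. kron (pauli_mat p) M) ps (1\<^sub>m 1)"

definition two_site :: "nat \<Rightarrow> nat \<Rightarrow> pauli \<Rightarrow> pauli \<Rightarrow> pauli list" where
  "two_site n j A B = map (\<lambda>k. if k = j then A else if k = j + 1 then B else PI) [1..<n+1]"

definition comm :: "complex mat \<Rightarrow> complex mat \<Rightarrow> complex mat" where
  "comm A B = A * B - B * A"

inductive_set lie_closure :: "nat \<Rightarrow> complex mat set \<Rightarrow> complex mat set"
  for N :: nat and S :: "complex mat set" where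
  gen: "x \<in> S \<Longrightarrow> x \<in> lie_closure N S"
| zero: "0\<^sub>m N N \<in> lie_closure N S"
| add: "x \<in> lie_closure N S \<Longrightarrow> y \<in> lie_closure N S \<Longrightarrow> x + y \<in> lie_closure N S"
| smult: "x \<in> lie_closure N S \<Longrightarrow> complex_of_real r \<cdot>\<^sub>m x \<in> lie_closure N S"
| bracket: "x \<in> lie_closure N S \<Longrightarrow> y \<in> lie_closure N S \<Longrightarrow> comm x y \<in> lie_closure N S"

inductive_set real_span_mat :: "nat \<Rightarrow> complex mat set \<Rightarrow> complex mat set"
  for N :: nat and S :: "complex mat set" where
  gen: "x \<in> S \<Longrightarrow> x \<in> real_span_mat N S"
| zero: "0\<^sub>m N N \<in> real_span_mat N S"
| add: "x \<in> real_span_mat N S \<Longrightarrow> y \<in> real_span_mat N S \<Longrightarrow> x + y \<in> real_span_mat N S"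
| smult: "x \<in> real_span_mat N S \<Longrightarrow> complex_of_real r \<cdot>\<^sub>m x \<in> real_span_mat N S"

definition a15 :: "nat \<Rightarrow> complex mat set" where
  "a15 n = lie_closure (2^n)
     {\<i> \<cdot>\<^sub>m pstring_mat (two_site n j PX B) | j B. 1 \<le> j \<and> j \<le> n - 1 \<and> B \<in> {PX, PY, PZ}}"

definition ctrans :: "complex mat \<Rightarrow> complex mat" where
  "ctrans A = mat (dim_col A) (dim_row A) (\<lambda>(i,j). cnj (A $$ (j,i)))"

definition mtrace :: "complex mat \<Rightarrow> complex" where
  "mtrace A = (\<Sum>i<dim_row A. A $$ (i,i))"

definition su :: "nat \<Rightarrow> complex mat set" where
  "su N = {A \<in> carrier_mat N N. ctrans A = - A \<and> mtrace A = 0}"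

definition lie_iso_sum :: "(complex mat \<Rightarrow> complex mat \<times> complex mat) \<Rightarrow> complex mat set
     \<Rightarrow> complex mat set \<Rightarrow> complex mat set \<Rightarrow> bool" where
  "lie_iso_sum f L M1 M2 \<longleftrightarrow> bij_betw f L (M1 \<times> M2)
     \<and> (\<forall>x\<in>L. \<forall>y\<in>L. f (x + y) = (fst (f x) + fst (f y), snd (f x) + snd (f y)))
     \<and> (\<forall>x\<in>L. \<forall>r::real. f (complex_of_real r \<cdot>\<^sub>m x)
            = (complex_of_real r \<cdot>\<^sub>m fst (f x), complex_of_real r \<cdot>\<^sub>m snd (f x)))
     \<and> (\<forall>x\<in>L. \<forall>y\<in>L. f (comm x y) = (comm (fst (f x)) (fst (f y)), comm (snd (f x)) (snd (f y))))"

end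

theory Submission
  imports Defs
begin

text \<open>
  The brackets of Pauli strings are governed by a sign: iP and iQ commute when P and Q
  anticommute at an even number of sites, and otherwise [iP, iQ] = \<plusminus>2i PQ. The span of
  the strings with first factor I or X (other than I...I and X_1) is therefore closed under
  brackets, and conversely an induction on n, appending one site at a time, reaches every
  such string from the generators by brackets of anticommuting strings.
  Every element of this span commutes with X_1 = X \<otimes> 1, i.e. has block form [[P,Q],[Q,P]];
  restricting to the two eigenspaces of X_1 gives the Lie algebra homomorphism
  A \<mapsto> (P + Q, P - Q). It is injective on such matrices and onto su \<oplus> su, because the
  traceless Pauli strings of length n - 1 span su(2^(n-1)).
\<close>

lemma sum_upt_2: "(\<Sum>k = 0..<2. f k) = f 0 + f (1::nat)" for f :: "nat \<Rightarrow> complex"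
  by (simp add: numeral_2_eq_2)

lemma sum_upt_double:
  "(\<Sum>k = 0..<2 * K. f k) = (\<Sum>k = 0..<K. f k) + (\<Sum>k = 0..<K. f (k + K))" for f :: "nat \<Rightarrow> complex"
proof -
  have "{0..<2 * K} = {0..<K} \<union> {K..<2 * K}" by auto
  hence "(\<Sum>k = 0..<2 * K. f k) = (\<Sum>k = 0..<K. f k) + (\<Sum>k = K..<2 * K. f k)"
    by (simp add: sum.union_disjoint)
  also have "(\<Sum>k = K..<2 * K. f k) = (\<Sum>k = 0..<K. f (k + K))"
    using sum.shift_bounds_nat_ivl[of f 0 K K] by (simp add: mult_2)
  finally show ?thesis .
qed

lemma lower_upper_index_cases:
  fixes r K :: nat
  assumes "r < 2 * K"
  obtains "r < K" "r div K = 0" "r mod K = r"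
    | s where "r = s + K" "s < K" "r div K = 1" "r mod K = s"
proof (cases "r < K")
  case True thus ?thesis by (intro that(1)) simp_all
next
  case False
  hence "r = (r - K) + K" "r - K < K" using assms by auto
  thus ?thesis using that(2) by (metis div_add_self2 div_less mod_add_self2 mod_less not_less0 add_0 plus_1_eq_Suc)
qed

lemma index_mult_mat_sum:
  "A \<in> carrier_mat m k \<Longrightarrow> B \<in> carrier_mat k n \<Longrightarrow> i < m \<Longrightarrow> j < n \<Longrightarrow>
   (A * B) $$ (i,j) = (\<Sum>l = 0..<k. A $$ (i,l) * B $$ (l,j))"
  by (auto simp: scalar_prod_def intro!: sum.cong)

lemma smult_mat_smult_mat: "a \<cdot>\<^sub>m (b \<cdot>\<^sub>m A) = (a * b) \<cdot>\<^sub>m (A :: complex mat)"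
  by (rule eq_matI) simp_all

lemma smult_mat_one: "1 \<cdot>\<^sub>m A = (A :: complex mat)"
  by (rule eq_matI) simp_all

lemma smult_mat_diff: "(a \<cdot>\<^sub>m A) - (b \<cdot>\<^sub>m A) = (a - b) \<cdot>\<^sub>m (A :: complex mat)"
  by (rule eq_matI) (simp_all add: algebra_simps)

lemma smult_mat_mult_smult_mat:
  "A \<in> carrier_mat N N \<Longrightarrow> B \<in> carrier_mat N N \<Longrightarrow>
   (a \<cdot>\<^sub>m A) * (b \<cdot>\<^sub>m B) = (a * b) \<cdot>\<^sub>m (A * B :: complex mat)"
  by (metis mult_smult_assoc_mat mult_smult_distrib smult_carrier_mat smult_mat_smult_mat)

lemma sum_diff_eq_imp_eq:
  fixes x y u v :: "'a :: field_char_0"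
  assumes sum: "x + y = u + v" and diff: "x - y = u - v"
  shows "x = u \<and> y = v"
proof -
  have "(x + y) + (x - y) = (u + v) + (u - v)" using sum diff by simp
  hence "x = u" by (simp add: algebra_simps flip: mult_2)
  thus ?thesis using sum by simp
qed

lemma dim_kron [simp]:
  "dim_row (kron A B) = dim_row A * dim_row B" "dim_col (kron A B) = dim_col A * dim_col B"
  by (simp_all add: kron_def)

lemma index_kron:
  "i < dim_row A * dim_row B \<Longrightarrow> j < dim_col A * dim_col B \<Longrightarrow>
   kron A B $$ (i,j) = A $$ (i div dim_row B, j div dim_col B) * B $$ (i mod dim_row B, j mod dim_col B)"
  unfolding kron_def by (subst index_mat) auto

lemma kron_carrier_mat:
  "A \<in> carrier_mat a b \<Longrightarrow> B \<in> carrier_mat c d \<Longrightarrow> kron A B \<in> carrier_mat (a * c) (b * d)"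
  by (metis carrier_matD carrier_matI dim_kron)

lemma kron_mult_qubit:
  assumes A: "A \<in> carrier_mat 2 2" and C: "C \<in> carrier_mat 2 2"
    and B: "B \<in> carrier_mat K K" and D: "D \<in> carrier_mat K K"
  shows "kron A B * kron C D = kron (A * C) (B * D)"
proof (rule eq_matI)
  fix i j assume "i < dim_row (kron (A * C) (B * D))" and "j < dim_col (kron (A * C) (B * D))"
  hence i: "i < 2 * K" and j: "j < 2 * K" using A B C D by auto
  have K: "K > 0" using i by (cases K) auto
  have blocks: "i div K < 2" "j div K < 2" "i mod K < K" "j mod K < K"
    using i j K by (simp_all add: less_mult_imp_div_less)
  have "(kron A B * kron C D) $$ (i,j) = (\<Sum>k = 0..<2 * K. kron A B $$ (i,k) * kron C D $$ (k,j))"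
    using A B C D i j by (intro index_mult_mat_sum[where k = "2 * K"]) (auto intro: kron_carrier_mat)
  also have "\<dots> = (\<Sum>k = 0..<K. A $$ (i div K, 0) * C $$ (0, j div K) * (B $$ (i mod K, k) * D $$ (k, j mod K)))
       + (\<Sum>k = 0..<K. A $$ (i div K, 1) * C $$ (1, j div K) * (B $$ (i mod K, k) * D $$ (k, j mod K)))"
    unfolding sum_upt_double using A B C D i j
    by (intro arg_cong2[where f = "(+)"] sum.cong) (auto simp: index_kron)
  also have "\<dots> = (A $$ (i div K, 0) * C $$ (0, j div K) + A $$ (i div K, 1) * C $$ (1, j div K))
        * (\<Sum>k = 0..<K. B $$ (i mod K, k) * D $$ (k, j mod K))"
    by (simp only: distrib_right sum_distrib_left mult.assoc sum.distrib)
  also have "\<dots> = (A * C) $$ (i div K, j div K) * (B * D) $$ (i mod K, j mod K)"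
    using index_mult_mat_sum[OF A C blocks(1,2)] index_mult_mat_sum[OF B D blocks(3,4)]
    by (simp add: sum_upt_2)
  also have "\<dots> = kron (A * C) (B * D) $$ (i,j)"
    using A B C D i j by (simp add: index_kron)
  finally show "(kron A B * kron C D) $$ (i,j) = kron (A * C) (B * D) $$ (i,j)" .
qed auto

lemma kron_smult: "kron (a \<cdot>\<^sub>m A) (b \<cdot>\<^sub>m B) = (a * b) \<cdot>\<^sub>m kron A B"
proof (rule eq_matI)
  fix i j assume "i < dim_row ((a * b) \<cdot>\<^sub>m kron A B)" and "j < dim_col ((a * b) \<cdot>\<^sub>m kron A B)"
  hence i: "i < dim_row A * dim_row B" and j: "j < dim_col A * dim_col B" by auto
  hence "dim_row B > 0" "dim_col B > 0" "i div dim_row B < dim_row A" "j div dim_col B < dim_col A"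
    by (auto simp: less_mult_imp_div_less intro!: gr0I)
  thus "kron (a \<cdot>\<^sub>m A) (b \<cdot>\<^sub>m B) $$ (i, j) = ((a * b) \<cdot>\<^sub>m kron A B) $$ (i, j)"
    using i j by (simp add: index_kron)
qed auto

lemma kron_smult_right: "kron A (c \<cdot>\<^sub>m B) = c \<cdot>\<^sub>m kron A B"
  using kron_smult[of 1 A c B] by (simp add: smult_mat_one)

lemma kron_add_right:
  assumes "B \<in> carrier_mat K K" and "C \<in> carrier_mat K K"
  shows "kron A (B + C) = kron A B + kron A C"
proof (rule eq_matI)
  fix i j assume "i < dim_row (kron A B + kron A C)" and "j < dim_col (kron A B + kron A C)"
  hence i: "i < dim_row A * K" and j: "j < dim_col A * K" using assms by auto
  hence "K > 0" "i div K < dim_row A" "j div K < dim_col A"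
    by (auto simp: less_mult_imp_div_less intro!: gr0I)
  thus "kron A (B + C) $$ (i, j) = (kron A B + kron A C) $$ (i, j)"
    using i j assms by (simp add: index_kron algebra_simps)
qed (use assms in auto)

lemma kron_zero_right: "kron A (0\<^sub>m K K) = 0\<^sub>m (dim_row A * K) (dim_col A * K)"
proof (rule eq_matI)
  fix i j assume "i < dim_row (0\<^sub>m (dim_row A * K) (dim_col A * K) :: complex mat)"
    and "j < dim_col (0\<^sub>m (dim_row A * K) (dim_col A * K) :: complex mat)"
  hence i: "i < dim_row A * K" and j: "j < dim_col A * K" by auto
  hence "K > 0" by (auto intro!: gr0I)
  thus "kron A (0\<^sub>m K K) $$ (i, j) = 0\<^sub>m (dim_row A * K) (dim_col A * K) $$ (i, j)"
    using i j by (simp add: index_kron)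
qed auto

fun pauli_mul :: "pauli \<Rightarrow> pauli \<Rightarrow> pauli" where
  "pauli_mul PI q = q"
| "pauli_mul p PI = p"
| "pauli_mul PX PX = PI" | "pauli_mul PX PY = PZ" | "pauli_mul PX PZ = PY"
| "pauli_mul PY PX = PZ" | "pauli_mul PY PY = PI" | "pauli_mul PY PZ = PX"
| "pauli_mul PZ PX = PY" | "pauli_mul PZ PY = PX" | "pauli_mul PZ PZ = PI"

fun pauli_phase :: "pauli \<Rightarrow> pauli \<Rightarrow> complex" where
  "pauli_phase PX PY = \<i>" | "pauli_phase PY PX = - \<i>"
| "pauli_phase PY PZ = \<i>" | "pauli_phase PZ PY = - \<i>"
| "pauli_phase PZ PX = \<i>" | "pauli_phase PX PZ = - \<i>"
| "pauli_phase _ _ = 1"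

definition anticommute :: "pauli \<Rightarrow> pauli \<Rightarrow> bool" where
  "anticommute p q \<longleftrightarrow> p \<noteq> PI \<and> q \<noteq> PI \<and> p \<noteq> q"

lemma pauli_mat_carrier [simp]: "pauli_mat p \<in> carrier_mat 2 2"
  by (cases p) (auto simp: pauli_mat_def)

lemma dim_pauli_mat [simp]: "dim_row (pauli_mat p) = 2" "dim_col (pauli_mat p) = 2"
  by (cases p; simp add: pauli_mat_def)+

lemma pauli_mat_mult: "pauli_mat p * pauli_mat q = pauli_phase p q \<cdot>\<^sub>m pauli_mat (pauli_mul p q)"
  apply (rule eq_matI)
   apply (simp add: index_mult_mat)
   apply (cases p; cases q; auto simp: pauli_mat_def scalar_prod_def sum_upt_2 dest!: less_2_cases)
  apply simp_all
  done

lemma pauli_phase_swap: "pauli_phase q p = (if anticommute p q then -1 else 1) * pauli_phase p q"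
  by (cases p; cases q; simp add: anticommute_def)

lemma pauli_phase_square: "pauli_phase p q ^ 2 = (if anticommute p q then -1 else 1)"
  by (cases p; cases q; simp add: anticommute_def power2_eq_square)

lemma pauli_mul_eq_PI_iff: "pauli_mul p q = PI \<longleftrightarrow> p = q"
  by (cases p; cases q; simp)

lemma pauli_mul_commute: "pauli_mul p q = pauli_mul q p"
  by (cases p; cases q; simp)

lemma pstring_mat_Nil: "pstring_mat [] = 1\<^sub>m 1"
  by (simp add: pstring_mat_def)

lemma pstring_mat_Cons: "pstring_mat (p # ps) = kron (pauli_mat p) (pstring_mat ps)"
  by (simp add: pstring_mat_def)

lemma pstring_mat_carrier: "pstring_mat ps \<in> carrier_mat (2 ^ length ps) (2 ^ length ps)"
  by (induction ps) (auto simp: pstring_mat_Nil pstring_mat_Cons intro!: kron_carrier_mat[where a = 2 and b = 2])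

lemma dim_pstring_mat [simp]:
  "dim_row (pstring_mat ps) = 2 ^ length ps" "dim_col (pstring_mat ps) = 2 ^ length ps"
  using pstring_mat_carrier[of ps] by auto

lemma kron_pauli_pstring: "kron (pauli_mat p) (\<i> \<cdot>\<^sub>m pstring_mat ps) = \<i> \<cdot>\<^sub>m pstring_mat (p # ps)"
  by (simp add: kron_smult_right pstring_mat_Cons)

fun string_mul :: "pauli list \<Rightarrow> pauli list \<Rightarrow> pauli list" where
  "string_mul (p # ps) (q # qs) = pauli_mul p q # string_mul ps qs"
| "string_mul _ _ = []"

fun string_phase :: "pauli list \<Rightarrow> pauli list \<Rightarrow> complex" where
  "string_phase (p # ps) (q # qs) = pauli_phase p q * string_phase ps qs"
| "string_phase _ _ = 1"

fun anticommute_count :: "pauli list \<Rightarrow> pauli list \<Rightarrow> nat" where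
  "anticommute_count (p # ps) (q # qs) = (if anticommute p q then 1 else 0) + anticommute_count ps qs"
| "anticommute_count _ _ = 0"

lemma length_string_mul [simp]: "length (string_mul ps qs) = min (length ps) (length qs)"
  by (induction ps qs rule: string_mul.induct) auto

lemma string_mul_commute: "string_mul ps qs = string_mul qs ps"
  by (induction ps qs rule: string_mul.induct) (auto simp: pauli_mul_commute)

lemma string_mul_append:
  "length ps = length qs \<Longrightarrow> string_mul (ps @ xs) (qs @ ys) = string_mul ps qs @ string_mul xs ys"
  by (induction ps qs rule: string_mul.induct) auto

lemma string_mul_replicate_PI_right: "length ps = m \<Longrightarrow> string_mul ps (replicate m PI) = ps"
proof (induction ps arbitrary: m)
  case (Cons p ps) thus ?case by (cases m; cases p) auto
qed simp

lemma string_mul_eq_replicate_PI: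
  "length ps = length qs \<Longrightarrow> string_mul ps qs = replicate (length ps) PI \<Longrightarrow> ps = qs"
  by (induction ps qs rule: string_mul.induct) (auto simp: pauli_mul_eq_PI_iff)

lemma anticommute_count_append:
  "length ps = length qs \<Longrightarrow>
   anticommute_count (ps @ xs) (qs @ ys) = anticommute_count ps qs + anticommute_count xs ys"
  by (induction ps qs rule: string_mul.induct) auto

lemma anticommute_count_replicate_PI_right:
  "length ps = m \<Longrightarrow> anticommute_count ps (replicate m PI) = 0"
proof (induction ps arbitrary: m)
  case (Cons p ps) thus ?case by (cases m) (auto simp: anticommute_def)
qed simp

lemma anticommute_count_self: "anticommute_count ps ps = 0"
  by (induction ps) (auto simp: anticommute_def)

lemma pstring_mat_mult:
  "length ps = length qs \<Longrightarrow>
   pstring_mat ps * pstring_mat qs = string_phase ps qs \<cdot>\<^sub>m pstring_mat (string_mul ps qs)"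
proof (induction ps qs rule: string_mul.induct)
  case (1 p ps q qs)
  have "kron (pauli_mat p) (pstring_mat ps) * kron (pauli_mat q) (pstring_mat qs)
     = kron (pauli_mat p * pauli_mat q) (pstring_mat ps * pstring_mat qs)"
    using 1 pstring_mat_carrier[of qs] by (intro kron_mult_qubit pstring_mat_carrier) auto
  thus ?case using 1 by (simp add: pstring_mat_Cons pauli_mat_mult kron_smult)
qed (auto simp: pstring_mat_Nil intro!: eq_matI)

lemma string_phase_swap:
  "length ps = length qs \<Longrightarrow> string_phase qs ps = (-1) ^ anticommute_count ps qs * string_phase ps qs"
proof (induction ps qs rule: string_mul.induct)
  case (1 p ps q qs)
  have "string_phase (q # qs) (p # ps) = pauli_phase q p * string_phase qs ps" by simp
  also have "\<dots> = ((if anticommute p q then -1 else 1) * pauli_phase p q)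
      * ((-1) ^ anticommute_count ps qs * string_phase ps qs)"
    using pauli_phase_swap[where p = p and q = q] 1 by simp
  also have "\<dots> = (-1) ^ anticommute_count (p # ps) (q # qs) * string_phase (p # ps) (q # qs)"
    by simp
  finally show ?case .
qed auto

lemma string_phase_square:
  "length ps = length qs \<Longrightarrow> string_phase ps qs ^ 2 = (-1) ^ anticommute_count ps qs"
  by (induction ps qs rule: string_mul.induct) (auto simp: pauli_phase_square power_mult_distrib)

lemma comm_pstring_mat:
  assumes len: "length ps = length qs"
  shows "comm (\<i> \<cdot>\<^sub>m pstring_mat ps) (\<i> \<cdot>\<^sub>m pstring_mat qs)
     = (((-1) ^ anticommute_count ps qs - 1) * string_phase ps qs) \<cdot>\<^sub>m pstring_mat (string_mul ps qs)"
proof -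
  have P: "pstring_mat ps \<in> carrier_mat (2 ^ length ps) (2 ^ length ps)"
    and Q: "pstring_mat qs \<in> carrier_mat (2 ^ length ps) (2 ^ length ps)"
    using pstring_mat_carrier[of ps] pstring_mat_carrier[of qs] len by auto
  have pq: "(\<i> \<cdot>\<^sub>m pstring_mat ps) * (\<i> \<cdot>\<^sub>m pstring_mat qs)
      = (- string_phase ps qs) \<cdot>\<^sub>m pstring_mat (string_mul ps qs)"
    using pstring_mat_mult[OF len] by (simp add: smult_mat_mult_smult_mat[OF P Q] smult_mat_smult_mat)
  have qp: "(\<i> \<cdot>\<^sub>m pstring_mat qs) * (\<i> \<cdot>\<^sub>m pstring_mat ps)
      = (- ((-1) ^ anticommute_count ps qs * string_phase ps qs)) \<cdot>\<^sub>m pstring_mat (string_mul ps qs)"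
    using pstring_mat_mult[of qs ps] len string_phase_swap[OF len]
    by (simp add: smult_mat_mult_smult_mat[OF Q P] smult_mat_smult_mat string_mul_commute)
  show ?thesis unfolding comm_def pq qp smult_mat_diff by (simp add: algebra_simps)
qed

lemma comm_pstring_mat_commuting:
  assumes "length ps = length qs" and "even (anticommute_count ps qs)"
  shows "comm (\<i> \<cdot>\<^sub>m pstring_mat ps) (\<i> \<cdot>\<^sub>m pstring_mat qs) = 0\<^sub>m (2 ^ length ps) (2 ^ length ps)"
  using assms by (auto simp: comm_pstring_mat intro!: eq_matI)

lemma comm_pstring_mat_anticommuting:
  assumes len: "length ps = length qs" and odd: "odd (anticommute_count ps qs)"
  obtains r :: real where "\<bar>r\<bar> = 2"
    and "comm (\<i> \<cdot>\<^sub>m pstring_mat ps) (\<i> \<cdot>\<^sub>m pstring_mat qs)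
         = complex_of_real r \<cdot>\<^sub>m (\<i> \<cdot>\<^sub>m pstring_mat (string_mul ps qs))"
proof -
  have "string_phase ps qs ^ 2 = \<i> ^ 2" using string_phase_square[OF len] odd by simp
  hence phase: "string_phase ps qs = \<i> \<or> string_phase ps qs = - \<i>"
    using power2_eq_iff[of "string_phase ps qs" \<i>] by simp
  have "comm (\<i> \<cdot>\<^sub>m pstring_mat ps) (\<i> \<cdot>\<^sub>m pstring_mat qs)
      = (-2 * string_phase ps qs) \<cdot>\<^sub>m pstring_mat (string_mul ps qs)"
    using comm_pstring_mat[OF len] odd by simp
  with phase that[of "-2"] that[of 2] show ?thesis by (auto simp: smult_mat_smult_mat)
qed

lemma comm_add_left:
  assumes "A \<in> carrier_mat N N" "B \<in> carrier_mat N N" "C \<in> carrier_mat N N"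
  shows "comm (A + B) C = comm A C + comm B C"
  using assms unfolding comm_def
  by (simp add: add_mult_distrib_mat mult_add_distrib_mat) (intro eq_matI; auto)

lemma comm_add_right:
  assumes "A \<in> carrier_mat N N" "B \<in> carrier_mat N N" "C \<in> carrier_mat N N"
  shows "comm C (A + B) = comm C A + comm C B"
  using assms unfolding comm_def
  by (simp add: add_mult_distrib_mat mult_add_distrib_mat) (intro eq_matI; auto)

lemma comm_smult_left:
  assumes "A \<in> carrier_mat N N" "B \<in> carrier_mat N N"
  shows "comm (c \<cdot>\<^sub>m A) B = c \<cdot>\<^sub>m comm A B"
  using assms unfolding comm_def
  by (simp add: mult_smult_assoc_mat mult_smult_distrib) (intro eq_matI; auto simp: algebra_simps)

lemma comm_smult_right:
  assumes "A \<in> carrier_mat N N" "B \<in> carrier_mat N N"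
  shows "comm B (c \<cdot>\<^sub>m A) = c \<cdot>\<^sub>m comm B A"
  using assms unfolding comm_def
  by (simp add: mult_smult_assoc_mat mult_smult_distrib) (intro eq_matI; auto simp: algebra_simps)

lemma comm_zero_left: "A \<in> carrier_mat N N \<Longrightarrow> comm (0\<^sub>m N N) A = 0\<^sub>m N N"
  unfolding comm_def by (intro eq_matI) auto

lemma comm_zero_right: "A \<in> carrier_mat N N \<Longrightarrow> comm A (0\<^sub>m N N) = 0\<^sub>m N N"
  unfolding comm_def by (intro eq_matI) auto

lemma real_span_mat_carrier:
  assumes "S \<subseteq> carrier_mat N N"
  shows "A \<in> real_span_mat N S \<Longrightarrow> A \<in> carrier_mat N N"
  by (induction rule: real_span_mat.induct) (use assms in auto)

lemma kron_real_span_mat: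
  assumes A: "A \<in> carrier_mat d d" and S: "S \<subseteq> carrier_mat K K" and T: "kron A ` S \<subseteq> T"
  shows "B \<in> real_span_mat K S \<Longrightarrow> kron A B \<in> real_span_mat (d * K) T"
proof (induction rule: real_span_mat.induct)
  case (gen x) thus ?case using T real_span_mat.gen by blast
next
  case zero thus ?case using kron_zero_right[of A K] A real_span_mat.zero by auto
next
  case (add x y)
  hence "x \<in> carrier_mat K K" "y \<in> carrier_mat K K" using real_span_mat_carrier[OF S] by auto
  thus ?case using kron_add_right add real_span_mat.add by metis
next
  case (smult x r) thus ?case using kron_smult_right real_span_mat.smult by metis
qed

lemma real_span_mat_comm_closed:
  assumes S: "S \<subseteq> carrier_mat N N"
    and gens: "\<And>x y. x \<in> S \<Longrightarrow> y \<in> S \<Longrightarrow> comm x y \<in> real_span_mat N S"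
    and A: "A \<in> real_span_mat N S" and B: "B \<in> real_span_mat N S"
  shows "comm A B \<in> real_span_mat N S"
proof -
  note carrier = real_span_mat_carrier[OF S]
  have gen_left: "comm x B \<in> real_span_mat N S" if x: "x \<in> S" for x
    using B
  proof (induction rule: real_span_mat.induct)
    case (gen y) thus ?case using gens x by blast
  next
    case zero thus ?case using comm_zero_right x S real_span_mat.zero by auto
  next
    case (add y z)
    have "comm x (y + z) = comm x y + comm x z"
      using x S carrier[OF add.hyps(1)] carrier[OF add.hyps(2)] by (intro comm_add_right[of _ N]) auto
    thus ?case using add real_span_mat.add by simp
  next
    case (smult y r)
    have "comm x (complex_of_real r \<cdot>\<^sub>m y) = complex_of_real r \<cdot>\<^sub>m comm x y"
      using x S carrier[OF smult.hyps] by (intro comm_smult_right[of _ N]) auto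
    thus ?case using smult real_span_mat.smult by simp
  qed
  from A show ?thesis
  proof (induction rule: real_span_mat.induct)
    case (gen x) thus ?case using gen_left by blast
  next
    case zero thus ?case using comm_zero_left[OF carrier[OF B]] real_span_mat.zero by simp
  next
    case (add x y)
    with B have "comm (x + y) B = comm x B + comm y B" by (intro comm_add_left[of _ N] carrier)
    thus ?case using add real_span_mat.add by simp
  next
    case (smult x r)
    with B have "comm (complex_of_real r \<cdot>\<^sub>m x) B = complex_of_real r \<cdot>\<^sub>m comm x B"
      by (intro comm_smult_left[of _ N] carrier)
    thus ?case using smult real_span_mat.smult by simp
  qed
qed

lemma lie_closure_subset_real_span:
  assumes "S \<subseteq> real_span_mat N T" and "T \<subseteq> carrier_mat N N"
    and "\<And>x y. x \<in> T \<Longrightarrow> y \<in> T \<Longrightarrow> comm x y \<in> real_span_mat N T"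
  shows "lie_closure N S \<subseteq> real_span_mat N T"
proof
  fix A assume "A \<in> lie_closure N S"
  thus "A \<in> real_span_mat N T"
    by induction (use assms in \<open>auto intro: real_span_mat.intros real_span_mat_comm_closed\<close>)
qed

lemma real_span_subset_lie_closure:
  assumes "T \<subseteq> lie_closure N S"
  shows "real_span_mat N T \<subseteq> lie_closure N S"
proof
  fix A assume "A \<in> real_span_mat N T"
  thus "A \<in> lie_closure N S"
    by induction (use assms in \<open>auto intro: lie_closure.intros\<close>)
qed

section \<open>The Pauli strings spanning a15\<close>

definition a15_strings :: "nat \<Rightarrow> pauli list set" where
  "a15_strings n = {ps. length ps = n \<and> hd ps \<in> {PI, PX}
     \<and> ps \<noteq> replicate n PI \<and> ps \<noteq> PX # replicate (n - 1) PI}"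

definition a15_basis :: "nat \<Rightarrow> complex mat set" where
  "a15_basis n = {\<i> \<cdot>\<^sub>m pstring_mat ps | ps. ps \<in> a15_strings n}"

lemma a15_basis_carrier: "a15_basis n \<subseteq> carrier_mat (2 ^ n) (2 ^ n)"
  unfolding a15_basis_def a15_strings_def using pstring_mat_carrier by auto

lemma string_mul_in_a15_strings:
  assumes p: "ps \<in> a15_strings n" and q: "qs \<in> a15_strings n"
    and odd: "odd (anticommute_count ps qs)"
  shows "string_mul ps qs \<in> a15_strings n"
proof -
  have lp: "length ps = n" and lq: "length qs = n" and hp: "hd ps \<in> {PI, PX}" and hq: "hd qs \<in> {PI, PX}"
    using p q unfolding a15_strings_def by auto
  have "n \<noteq> 0" using odd lp lq by auto
  then obtain a ps' b qs' where ps: "ps = a # ps'" and qs: "qs = b # qs'"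
    using lp lq by (cases ps; cases qs) auto
  have l': "length ps' = length qs'" using lp lq ps qs by simp
  have "hd (string_mul ps qs) \<in> {PI, PX}" using hp hq unfolding ps qs by (cases a; cases b) auto
  moreover have "string_mul ps qs \<noteq> replicate n PI"
  proof
    assume "string_mul ps qs = replicate n PI"
    hence "ps = qs" using string_mul_eq_replicate_PI[of ps qs] lp lq by simp
    thus False using odd anticommute_count_self by simp
  qed
  moreover have "string_mul ps qs \<noteq> PX # replicate (n - 1) PI"
  proof
    assume e: "string_mul ps qs = PX # replicate (n - 1) PI"
    hence "string_mul ps' qs' = replicate (length ps') PI" using ps qs lp by simp
    hence "ps' = qs'" using string_mul_eq_replicate_PI l' by blast
    moreover have "pauli_mul a b = PX" using e ps qs by simp
    ultimately have "anticommute_count ps qs = 0"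
      using hp hq ps qs anticommute_count_self by (cases a; cases b) (auto simp: anticommute_def)
    thus False using odd by simp
  qed
  ultimately show ?thesis using lp lq unfolding a15_strings_def by simp
qed

lemma comm_a15_basis:
  assumes "A \<in> a15_basis n" and "B \<in> a15_basis n"
  shows "comm A B \<in> real_span_mat (2 ^ n) (a15_basis n)"
proof -
  obtain ps qs where p: "ps \<in> a15_strings n" and q: "qs \<in> a15_strings n"
    and AB: "A = \<i> \<cdot>\<^sub>m pstring_mat ps" "B = \<i> \<cdot>\<^sub>m pstring_mat qs"
    using assms unfolding a15_basis_def by blast
  have lp: "length ps = n" and len: "length ps = length qs" using p q unfolding a15_strings_def by auto
  show ?thesis
  proof (cases "even (anticommute_count ps qs)")
    case True
    thus ?thesis using comm_pstring_mat_commuting[OF len] lp AB real_span_mat.zero by simp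
  next
    case False
    then obtain r where r: "comm A B = complex_of_real r \<cdot>\<^sub>m (\<i> \<cdot>\<^sub>m pstring_mat (string_mul ps qs))"
      using comm_pstring_mat_anticommuting[OF len] AB by metis
    have "\<i> \<cdot>\<^sub>m pstring_mat (string_mul ps qs) \<in> a15_basis n"
      using string_mul_in_a15_strings[OF p q] False unfolding a15_basis_def by blast
    thus ?thesis unfolding r by (intro real_span_mat.smult real_span_mat.gen)
  qed
qed

lemma length_two_site [simp]: "length (two_site n j A B) = n"
  by (simp add: two_site_def)

lemma nth_two_site:
  "k < n \<Longrightarrow> two_site n j A B ! k = (if Suc k = j then A else if Suc k = j + 1 then B else PI)"
  unfolding two_site_def by (simp del: upt_Suc add: nth_upt)

lemma two_site_in_a15_strings:
  assumes j: "1 \<le> j" "j \<le> n - 1" and B: "B \<noteq> PI"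
  shows "two_site n j PX B \<in> a15_strings n"
proof -
  have "length (two_site n j PX B) \<noteq> 0" using j by simp
  hence "two_site n j PX B \<noteq> []" by blast
  hence "hd (two_site n j PX B) = two_site n j PX B ! 0" by (simp add: hd_conv_nth)
  hence "hd (two_site n j PX B) \<in> {PI, PX}" using j nth_two_site[of 0 n j PX B] by auto
  moreover have "two_site n j PX B ! (j - 1) = PX" "two_site n j PX B ! j = B"
    using j nth_two_site[of "j - 1" n j PX B] nth_two_site[of j n j PX B] by auto
  hence "two_site n j PX B \<noteq> replicate n PI" "two_site n j PX B \<noteq> PX # replicate (n - 1) PI"
    using j B by (auto simp: nth_Cons split: nat.splits)
  ultimately show ?thesis unfolding a15_strings_def by simp
qed

lemma a15_subset_real_span: "a15 n \<subseteq> real_span_mat (2 ^ n) (a15_basis n)"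
  unfolding a15_def
proof (rule lie_closure_subset_real_span[OF _ a15_basis_carrier comm_a15_basis])
  show "{\<i> \<cdot>\<^sub>m pstring_mat (two_site n j PX B) | j B. 1 \<le> j \<and> j \<le> n - 1 \<and> B \<in> {PX, PY, PZ}}
        \<subseteq> real_span_mat (2 ^ n) (a15_basis n)"
    using two_site_in_a15_strings unfolding a15_basis_def by (blast intro: real_span_mat.gen)
qed

inductive_set generated_strings :: "nat \<Rightarrow> pauli list set" for n :: nat where
  gen: "1 \<le> j \<Longrightarrow> j \<le> n - 1 \<Longrightarrow> B \<in> {PX, PY, PZ} \<Longrightarrow> two_site n j PX B \<in> generated_strings n"
| bracket: "ps \<in> generated_strings n \<Longrightarrow> qs \<in> generated_strings n \<Longrightarrow>
    odd (anticommute_count ps qs) \<Longrightarrow> string_mul ps qs \<in> generated_strings n"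

lemma generated_strings_length: "ps \<in> generated_strings n \<Longrightarrow> length ps = n"
  by (induction rule: generated_strings.induct) auto

lemma generated_strings_in_a15: "ps \<in> generated_strings n \<Longrightarrow> \<i> \<cdot>\<^sub>m pstring_mat ps \<in> a15 n"
proof (induction rule: generated_strings.induct)
  case (gen j B)
  thus ?case unfolding a15_def by (intro lie_closure.gen) blast
next
  case (bracket ps qs)
  have len: "length ps = length qs" using bracket generated_strings_length by simp
  obtain r where r: "\<bar>r\<bar> = 2" and c: "comm (\<i> \<cdot>\<^sub>m pstring_mat ps) (\<i> \<cdot>\<^sub>m pstring_mat qs)
      = complex_of_real r \<cdot>\<^sub>m (\<i> \<cdot>\<^sub>m pstring_mat (string_mul ps qs))"
    using comm_pstring_mat_anticommuting[OF len bracket(3)] .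
  have "complex_of_real (1 / r) \<cdot>\<^sub>m comm (\<i> \<cdot>\<^sub>m pstring_mat ps) (\<i> \<cdot>\<^sub>m pstring_mat qs)
      = complex_of_real (1 / r * r) \<cdot>\<^sub>m (\<i> \<cdot>\<^sub>m pstring_mat (string_mul ps qs))"
    by (simp only: c smult_mat_smult_mat of_real_mult mult.assoc)
  also have "\<dots> = \<i> \<cdot>\<^sub>m pstring_mat (string_mul ps qs)"
    using r by (auto simp: smult_mat_one)
  finally have "\<i> \<cdot>\<^sub>m pstring_mat (string_mul ps qs)
      = complex_of_real (1 / r) \<cdot>\<^sub>m comm (\<i> \<cdot>\<^sub>m pstring_mat ps) (\<i> \<cdot>\<^sub>m pstring_mat qs)" ..
  thus ?case using bracket(4,5) unfolding a15_def by (simp only: lie_closure.smult lie_closure.bracket)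
qed

lemma two_site_snoc_PI: "1 \<le> j \<Longrightarrow> j \<le> n - 1 \<Longrightarrow> two_site n j A B @ [PI] = two_site (Suc n) j A B"
  by (rule nth_equalityI) (auto simp: nth_two_site nth_append)

lemma two_site_last: "1 \<le> n \<Longrightarrow> two_site (Suc n) n A B = replicate (n - 1) PI @ [A, B]"
  by (rule nth_equalityI) (auto simp: nth_two_site nth_append nth_Cons split: nat.split)

lemma generated_strings_snoc_PI: "ps \<in> generated_strings n \<Longrightarrow> ps @ [PI] \<in> generated_strings (Suc n)"
proof (induction rule: generated_strings.induct)
  case (gen j B)
  hence "two_site (Suc n) j PX B \<in> generated_strings (Suc n)" by (intro generated_strings.gen) auto
  thus ?case using gen two_site_snoc_PI by simp
next
  case (bracket ps qs)
  have len: "length ps = length qs" using bracket generated_strings_length by simp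
  have "string_mul (ps @ [PI]) (qs @ [PI]) \<in> generated_strings (Suc n)"
    using bracket by (intro generated_strings.bracket) (auto simp: anticommute_count_append[OF len] anticommute_def)
  thus ?case by (simp add: string_mul_append[OF len])
qed

lemma generated_strings_bracket_append:
  "ps @ xs \<in> generated_strings n \<Longrightarrow> qs @ ys \<in> generated_strings n \<Longrightarrow> length ps = length qs \<Longrightarrow>
   odd (anticommute_count ps qs + anticommute_count xs ys) \<Longrightarrow>
   string_mul ps qs @ string_mul xs ys \<in> generated_strings n"
  using generated_strings.bracket[of "ps @ xs" n "qs @ ys"]
  by (simp add: string_mul_append anticommute_count_append)

lemma anticommuting_factors:
  assumes "\<sigma> \<noteq> PI"
  shows "\<exists>\<rho> \<tau>. \<rho> \<noteq> PI \<and> \<tau> \<noteq> PI \<and> anticommute \<rho> \<tau> \<and> pauli_mul \<rho> \<tau> = \<sigma>"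
proof (cases \<sigma>)
  case PX thus ?thesis by (intro exI[of _ PY] exI[of _ PZ]) (simp add: anticommute_def)
next
  case PY thus ?thesis by (intro exI[of _ PZ] exI[of _ PX]) (simp add: anticommute_def)
next
  case PZ thus ?thesis by (intro exI[of _ PX] exI[of _ PY]) (simp add: anticommute_def)
qed (use assms in simp)

text \<open>
  Induction step: a string of length n + 1 ending in I comes from length n. Otherwise its last
  two sites [\<sigma>, B] with \<sigma> \<noteq> I are produced by bracketing w @ [\<rho>, I] (known by induction)
  with I...I @ [\<tau>, B], where \<rho>, \<tau> anticommute and \<rho>\<tau> is proportional to \<sigma>; the
  strings I...I @ [\<tau>, B] come from the generators in the same way. Finally w @ [I, B] is the
  bracket of w @ [X, B1] and I...I @ [X, B2] for anticommuting B1, B2 with B1 B2 proportional to B.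
\<close>

locale generated_strings_step =
  fixes n :: nat
  assumes n_ge_2: "n \<ge> 2" and a15_strings_generated: "a15_strings n \<subseteq> generated_strings n"
begin

abbreviation I_prefix :: "pauli list" where "I_prefix \<equiv> replicate (n - 1) PI"

lemma snoc_PI_generated: "t \<in> a15_strings n \<Longrightarrow> t @ [PI] \<in> generated_strings (Suc n)"
  using a15_strings_generated generated_strings_snoc_PI by blast

lemma snoc_in_a15_strings:
  assumes "\<rho> \<noteq> PI" and "length w = n - 1" and "hd (w @ [\<rho>]) \<in> {PI, PX}"
  shows "w @ [\<rho>] \<in> a15_strings n"
proof -
  have "last (replicate n PI) = PI" "last (PX # I_prefix) = PI" using n_ge_2 by (simp_all add: last_ConsR)
  hence "w @ [\<rho>] \<noteq> replicate n PI" "w @ [\<rho>] \<noteq> PX # I_prefix"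
    using assms by (metis last_snoc)+
  thus ?thesis using assms n_ge_2 unfolding a15_strings_def by auto
qed

lemma I_prefix_X_generated: "B \<noteq> PI \<Longrightarrow> I_prefix @ [PX, B] \<in> generated_strings (Suc n)"
  using generated_strings.gen[of n "Suc n" B] two_site_last[of n PX B] n_ge_2
  by (cases B) auto

lemma I_prefix_generated:
  assumes "\<sigma> \<noteq> PI" and B: "B \<noteq> PI"
  shows "I_prefix @ [\<sigma>, B] \<in> generated_strings (Suc n)"
proof -
  have "I_prefix @ [pauli_mul \<rho> PX, B] \<in> generated_strings (Suc n)"
    if "\<rho> \<noteq> PI" "anticommute \<rho> PX" for \<rho>
  proof -
    have "I_prefix @ [\<rho>] \<in> a15_strings n" using that n_ge_2 by (intro snoc_in_a15_strings) auto
    hence "string_mul I_prefix I_prefix @ string_mul [\<rho>, PI] [PX, B] \<in> generated_strings (Suc n)"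
      using snoc_PI_generated[of "I_prefix @ [\<rho>]"] I_prefix_X_generated[OF B] that B
      by (intro generated_strings_bracket_append) (auto simp: anticommute_count_self anticommute_def)
    thus ?thesis by (simp add: string_mul_replicate_PI_right)
  qed
  from this[of PZ] this[of PY] have "I_prefix @ [PY, B] \<in> generated_strings (Suc n)"
    "I_prefix @ [PZ, B] \<in> generated_strings (Suc n)" by (simp_all add: anticommute_def)
  thus ?thesis using assms I_prefix_X_generated by (cases \<sigma>) auto
qed

lemma snoc_non_PI_generated:
  assumes w: "length w = n - 1" and hd: "hd (w @ [\<sigma>]) \<in> {PI, PX}" and "\<sigma> \<noteq> PI" and B: "B \<noteq> PI"
  shows "w @ [\<sigma>, B] \<in> generated_strings (Suc n)"
proof -
  obtain \<rho> \<tau> where \<rho>: "\<rho> \<noteq> PI" and \<tau>: "\<tau> \<noteq> PI" and anti: "anticommute \<rho> \<tau>"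
    and \<sigma>: "pauli_mul \<rho> \<tau> = \<sigma>"
    using anticommuting_factors[OF \<open>\<sigma> \<noteq> PI\<close>] by blast
  have "w \<noteq> []" using w n_ge_2 by auto
  hence "hd (w @ [\<rho>]) \<in> {PI, PX}" using hd by simp
  hence "w @ [\<rho>] \<in> a15_strings n" by (rule snoc_in_a15_strings[OF \<rho> w])
  hence "string_mul w I_prefix @ string_mul [\<rho>, PI] [\<tau>, B] \<in> generated_strings (Suc n)"
    using snoc_PI_generated[of "w @ [\<rho>]"] I_prefix_generated[OF \<tau> B] w anti B
    by (intro generated_strings_bracket_append) (auto simp: anticommute_count_replicate_PI_right anticommute_def)
  thus ?thesis using w \<sigma> by (simp add: string_mul_replicate_PI_right)
qed

lemma snoc_PI_non_PI_generated:
  assumes w: "length w = n - 1" and hd: "hd (w @ [PI]) \<in> {PI, PX}" and "B \<noteq> PI"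
  shows "w @ [PI, B] \<in> generated_strings (Suc n)"
proof -
  obtain B1 B2 where B1: "B1 \<noteq> PI" and B2: "B2 \<noteq> PI" and anti: "anticommute B1 B2"
    and B: "pauli_mul B1 B2 = B"
    using anticommuting_factors[OF \<open>B \<noteq> PI\<close>] by blast
  have "w \<noteq> []" using w n_ge_2 by auto
  hence "hd (w @ [PX]) \<in> {PI, PX}" using hd by simp
  hence "string_mul w I_prefix @ string_mul [PX, B1] [PX, B2] \<in> generated_strings (Suc n)"
    using snoc_non_PI_generated[OF w _ _ B1] I_prefix_generated[OF _ B2] w anti
    by (intro generated_strings_bracket_append) (auto simp: anticommute_count_replicate_PI_right anticommute_def)
  thus ?thesis using w B by (simp add: string_mul_replicate_PI_right)
qed

lemma a15_strings_Suc_generated: "a15_strings (Suc n) \<subseteq> generated_strings (Suc n)"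
proof
  fix t assume t: "t \<in> a15_strings (Suc n)"
  hence "t \<noteq> []" unfolding a15_strings_def by auto
  then obtain u c where tu: "t = u @ [c]" by (metis append_butlast_last_id)
  have lu: "length u = n" and hd_u: "hd u \<in> {PI, PX}"
    using t n_ge_2 unfolding tu a15_strings_def by (auto simp: hd_append split: if_splits)
  show "t \<in> generated_strings (Suc n)"
  proof (cases "c = PI")
    case True
    have "u \<noteq> replicate n PI"
    proof
      assume "u = replicate n PI"
      hence "t = replicate (Suc n) PI" using tu True by (simp add: replicate_append_same)
      thus False using t unfolding a15_strings_def by simp
    qed
    moreover have "u \<noteq> PX # I_prefix"
    proof
      assume "u = PX # I_prefix"
      hence "t = PX # replicate n PI" using tu True n_ge_2 by (cases n) (simp_all add: replicate_append_same)
      thus False using t unfolding a15_strings_def by simp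
    qed
    ultimately have "u \<in> a15_strings n" using lu hd_u unfolding a15_strings_def by simp
    thus ?thesis using snoc_PI_generated tu True by simp
  next
    case False
    have "u \<noteq> []" using lu n_ge_2 by auto
    then obtain w \<sigma> where uw: "u = w @ [\<sigma>]" by (metis append_butlast_last_id)
    have "length w = n - 1" "hd (w @ [\<sigma>]) \<in> {PI, PX}" using lu hd_u uw by auto
    thus ?thesis using snoc_non_PI_generated snoc_PI_non_PI_generated False unfolding tu uw
      by (cases "\<sigma> = PI") auto
  qed
qed

end

lemma a15_strings_2_generated: "a15_strings 2 \<subseteq> generated_strings 2"
proof
  fix t assume t: "t \<in> a15_strings 2"
  have X: "[PX, B] \<in> generated_strings 2" if "B \<in> {PX, PY, PZ}" for B
    using generated_strings.gen[of 1 2 B] that by (simp add: two_site_def numeral_2_eq_2)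
  have "[PI, PZ] \<in> generated_strings 2" "[PI, PX] \<in> generated_strings 2" "[PI, PY] \<in> generated_strings 2"
    using generated_strings.bracket[OF X X, of PX PY] generated_strings.bracket[OF X X, of PY PZ]
      generated_strings.bracket[OF X X, of PZ PX]
    by (simp_all add: anticommute_def)
  moreover obtain a b where "t = [a, b]" using t unfolding a15_strings_def
    by (cases t; cases "tl t") (auto simp: numeral_2_eq_2)
  ultimately show "t \<in> generated_strings 2" using t X unfolding a15_strings_def
    by (cases a; cases b) (auto simp: numeral_2_eq_2)
qed

lemma a15_strings_generated: "n \<ge> 2 \<Longrightarrow> a15_strings n \<subseteq> generated_strings n"
proof (induction n rule: nat_induct_at_least)
  case base thus ?case by (rule a15_strings_2_generated)
next
  case (Suc n)
  then interpret generated_strings_step n by unfold_locales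
  show ?case by (rule a15_strings_Suc_generated)
qed

theorem a15_eq_real_span:
  assumes "n \<ge> 2"
  shows "a15 n = real_span_mat (2 ^ n) (a15_basis n)"
proof
  show "a15 n \<subseteq> real_span_mat (2 ^ n) (a15_basis n)" by (rule a15_subset_real_span)
  have "a15_basis n \<subseteq> a15 n"
    using generated_strings_in_a15 a15_strings_generated[OF assms] unfolding a15_basis_def by blast
  thus "real_span_mat (2 ^ n) (a15_basis n) \<subseteq> a15 n"
    unfolding a15_def by (rule real_span_subset_lie_closure)
qed

section \<open>Traceless Pauli strings span su\<close>

lemma dim_ctrans [simp]: "dim_row (ctrans A) = dim_col A" "dim_col (ctrans A) = dim_row A"
  by (simp_all add: ctrans_def)

lemma index_ctrans: "i < dim_col A \<Longrightarrow> j < dim_row A \<Longrightarrow> ctrans A $$ (i,j) = cnj (A $$ (j,i))"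
  unfolding ctrans_def by (subst index_mat) auto

lemma ctrans_kron: "ctrans (kron A B) = kron (ctrans A) (ctrans B)"
proof (rule eq_matI)
  fix i j assume "i < dim_row (kron (ctrans A) (ctrans B))" and "j < dim_col (kron (ctrans A) (ctrans B))"
  hence i: "i < dim_col A * dim_col B" and j: "j < dim_row A * dim_row B" by auto
  hence "dim_col B > 0" "dim_row B > 0" "i div dim_col B < dim_col A" "j div dim_row B < dim_row A"
    by (auto simp: less_mult_imp_div_less intro!: gr0I)
  thus "ctrans (kron A B) $$ (i, j) = kron (ctrans A) (ctrans B) $$ (i, j)"
    using i j by (simp add: index_ctrans index_kron)
qed auto

lemma ctrans_smult: "ctrans (c \<cdot>\<^sub>m A) = cnj c \<cdot>\<^sub>m ctrans A"
  by (rule eq_matI) (auto simp: index_ctrans)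

lemma pauli_mat_hermitian: "ctrans (pauli_mat p) = pauli_mat p"
  apply (rule eq_matI)
   apply (simp add: index_ctrans)
   apply (cases p; auto simp: pauli_mat_def dest!: less_2_cases)
  apply simp_all
  done

lemma pstring_mat_hermitian: "ctrans (pstring_mat ps) = pstring_mat ps"
proof (induction ps)
  case Nil show ?case unfolding pstring_mat_Nil by (rule eq_matI) (auto simp: index_ctrans)
next
  case (Cons p ps) thus ?case by (simp add: pstring_mat_Cons ctrans_kron pauli_mat_hermitian)
qed

lemma mtrace_kron_qubit:
  assumes A: "A \<in> carrier_mat 2 2" and B: "B \<in> carrier_mat K K"
  shows "mtrace (kron A B) = mtrace A * mtrace B"
proof -
  have "mtrace (kron A B) = (\<Sum>i = 0..<2 * K. kron A B $$ (i,i))"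
    unfolding mtrace_def using A B by (simp add: atLeast0LessThan)
  also have "\<dots> = (\<Sum>i = 0..<K. A $$ (0,0) * B $$ (i,i)) + (\<Sum>i = 0..<K. A $$ (1,1) * B $$ (i,i))"
    unfolding sum_upt_double using A B
    by (auto simp: index_kron intro!: arg_cong2[where f = "(+)"] sum.cong)
  also have "\<dots> = mtrace A * mtrace B"
    unfolding mtrace_def using A B
    by (simp add: sum_distrib_left[symmetric] distrib_right atLeast0LessThan[symmetric] sum_upt_2)
  finally show ?thesis .
qed

lemma mtrace_pauli_mat: "mtrace (pauli_mat p) = (if p = PI then 2 else 0)"
  by (cases p) (auto simp: mtrace_def pauli_mat_def lessThan_nat_numeral)

lemma mtrace_pstring_mat: "ps \<noteq> replicate (length ps) PI \<Longrightarrow> mtrace (pstring_mat ps) = 0"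
proof (induction ps)
  case (Cons p ps)
  have "mtrace (pstring_mat (p # ps)) = mtrace (pauli_mat p) * mtrace (pstring_mat ps)"
    unfolding pstring_mat_Cons by (rule mtrace_kron_qubit[OF pauli_mat_carrier pstring_mat_carrier])
  thus ?case using Cons by (auto simp: mtrace_pauli_mat)
qed simp

lemma mtrace_smult: "A \<in> carrier_mat N N \<Longrightarrow> mtrace (c \<cdot>\<^sub>m A) = c * mtrace A"
  unfolding mtrace_def sum_distrib_left by (auto intro!: sum.cong)

lemma mtrace_add: "A \<in> carrier_mat N N \<Longrightarrow> B \<in> carrier_mat N N \<Longrightarrow> mtrace (A + B) = mtrace A + mtrace B"
  unfolding mtrace_def by (simp add: sum.distrib)

definition skew_hermitian :: "nat \<Rightarrow> complex mat set" where
  "skew_hermitian N = {A \<in> carrier_mat N N. ctrans A = - A}"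

lemma skew_hermitian_iff:
  "A \<in> skew_hermitian N \<longleftrightarrow>
   A \<in> carrier_mat N N \<and> (\<forall>i<N. \<forall>j<N. cnj (A $$ (j,i)) = - A $$ (i,j))"
  unfolding skew_hermitian_def by (auto simp: index_ctrans mat_eq_iff)

lemma su_iff_skew_hermitian: "A \<in> su N \<longleftrightarrow> A \<in> skew_hermitian N \<and> mtrace A = 0"
  unfolding su_def skew_hermitian_def by auto

lemma su_zero: "0\<^sub>m N N \<in> su N"
  unfolding su_iff_skew_hermitian skew_hermitian_iff mtrace_def by auto

lemma su_add: "A \<in> su N \<Longrightarrow> B \<in> su N \<Longrightarrow> A + B \<in> su N"
  unfolding su_iff_skew_hermitian skew_hermitian_iff by (auto simp: mtrace_add)

lemma su_smult: "A \<in> su N \<Longrightarrow> complex_of_real r \<cdot>\<^sub>m A \<in> su N"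
  unfolding su_iff_skew_hermitian skew_hermitian_iff by (auto simp: mtrace_smult)

lemma pstring_mat_in_su:
  assumes "ps \<noteq> replicate (length ps) PI"
  shows "\<i> \<cdot>\<^sub>m pstring_mat ps \<in> su (2 ^ length ps)"
proof -
  have "ctrans (\<i> \<cdot>\<^sub>m pstring_mat ps) = - (\<i> \<cdot>\<^sub>m pstring_mat ps)"
    by (simp add: ctrans_smult pstring_mat_hermitian) (rule eq_matI; simp)
  moreover have "mtrace (\<i> \<cdot>\<^sub>m pstring_mat ps) = 0"
    using mtrace_pstring_mat[OF assms] by (simp add: mtrace_smult[OF pstring_mat_carrier])
  ultimately show ?thesis unfolding su_def using pstring_mat_carrier[of ps] by auto
qed

definition pauli_component :: "pauli \<Rightarrow> nat \<Rightarrow> complex mat \<Rightarrow> complex mat" where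
  "pauli_component p K M = mat K K (\<lambda>(i,j). (case p of
      PI \<Rightarrow> M $$ (i,j) + M $$ (i+K,j+K)
    | PX \<Rightarrow> M $$ (i,j+K) + M $$ (i+K,j)
    | PY \<Rightarrow> \<i> * (M $$ (i,j+K) - M $$ (i+K,j))
    | PZ \<Rightarrow> M $$ (i,j) - M $$ (i+K,j+K)) / 2)"

lemma dim_pauli_component [simp]:
  "dim_row (pauli_component p K M) = K" "dim_col (pauli_component p K M) = K"
  by (simp_all add: pauli_component_def)

lemma pauli_decomposition:
  assumes M: "M \<in> carrier_mat (2 * K) (2 * K)"
  shows "M = kron (pauli_mat PI) (pauli_component PI K M) + kron (pauli_mat PX) (pauli_component PX K M)
           + kron (pauli_mat PY) (pauli_component PY K M) + kron (pauli_mat PZ) (pauli_component PZ K M)"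
    (is "M = ?D")
proof (rule eq_matI)
  fix r c assume "r < dim_row ?D" and "c < dim_col ?D"
  hence r: "r < 2 * K" and c: "c < 2 * K" by auto
  have "?D $$ (r,c) = (\<Sum>p \<leftarrow> [PI, PX, PY, PZ].
      pauli_mat p $$ (r div K, c div K) * pauli_component p K M $$ (r mod K, c mod K))"
    using r c by (simp add: index_kron)
  also have "\<dots> = M $$ (r,c)"
    using r c by (cases rule: lower_upper_index_cases[OF r]; cases rule: lower_upper_index_cases[OF c])
      (simp_all add: pauli_component_def pauli_mat_def field_simps)
  finally show "M $$ (r, c) = ?D $$ (r, c)" ..
qed (use M in auto)

lemma pauli_component_skew_hermitian:
  assumes "M \<in> skew_hermitian (2 * K)"
  shows "pauli_component p K M \<in> skew_hermitian K"
proof -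
  have e: "cnj (M $$ (j,i)) = - M $$ (i,j)" if "i < 2 * K" "j < 2 * K" for i j
    using assms that unfolding skew_hermitian_iff by blast
  show ?thesis unfolding skew_hermitian_iff
    by (cases p) (auto simp: pauli_component_def e field_simps)
qed

lemma mtrace_pauli_component_PI:
  assumes "M \<in> carrier_mat (2 * K) (2 * K)"
  shows "mtrace (pauli_component PI K M) = mtrace M / 2"
proof -
  have "mtrace M = (\<Sum>i = 0..<2 * K. M $$ (i,i))" using assms unfolding mtrace_def by (simp add: atLeast0LessThan)
  also have "\<dots> = 2 * (\<Sum>i = 0..<K. (M $$ (i,i) + M $$ (i+K,i+K)) / 2)"
    unfolding sum_upt_double by (simp add: sum.distrib sum_divide_distrib[symmetric])
  also have "(\<Sum>i = 0..<K. (M $$ (i,i) + M $$ (i+K,i+K)) / 2) = mtrace (pauli_component PI K M)"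
    unfolding mtrace_def pauli_component_def by (simp add: atLeast0LessThan)
  finally show ?thesis by simp
qed

definition pauli_basis :: "nat \<Rightarrow> complex mat set" where
  "pauli_basis m = {\<i> \<cdot>\<^sub>m pstring_mat ps | ps. length ps = m}"

definition traceless_pauli_basis :: "nat \<Rightarrow> complex mat set" where
  "traceless_pauli_basis m = {\<i> \<cdot>\<^sub>m pstring_mat ps | ps. length ps = m \<and> ps \<noteq> replicate m PI}"

lemma pauli_basis_carrier: "pauli_basis m \<subseteq> carrier_mat (2 ^ m) (2 ^ m)"
  unfolding pauli_basis_def using pstring_mat_carrier by auto

lemma traceless_pauli_basis_carrier: "traceless_pauli_basis m \<subseteq> carrier_mat (2 ^ m) (2 ^ m)"
  unfolding traceless_pauli_basis_def using pstring_mat_carrier by auto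

lemma kron_pauli_basis: "kron (pauli_mat p) ` pauli_basis m \<subseteq> pauli_basis (Suc m)"
  unfolding pauli_basis_def by (auto simp: kron_pauli_pstring)

lemma kron_non_PI_pauli_basis:
  "p \<noteq> PI \<Longrightarrow> kron (pauli_mat p) ` pauli_basis m \<subseteq> traceless_pauli_basis (Suc m)"
  unfolding pauli_basis_def traceless_pauli_basis_def by (auto simp: kron_pauli_pstring)

lemma kron_traceless_pauli_basis:
  "kron (pauli_mat p) ` traceless_pauli_basis m \<subseteq> traceless_pauli_basis (Suc m)"
  unfolding traceless_pauli_basis_def by (auto simp: kron_pauli_pstring)

lemma skew_hermitian_1:
  "M \<in> skew_hermitian 1 \<Longrightarrow> M = complex_of_real (Im (M $$ (0,0))) \<cdot>\<^sub>m (\<i> \<cdot>\<^sub>m 1\<^sub>m 1)"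
  unfolding skew_hermitian_iff by (auto simp: complex_eq_iff intro!: eq_matI)

lemma skew_hermitian_in_pauli_span:
  "M \<in> skew_hermitian (2 ^ m) \<Longrightarrow> M \<in> real_span_mat (2 ^ m) (pauli_basis m)"
proof (induction m arbitrary: M)
  case 0
  have "\<i> \<cdot>\<^sub>m 1\<^sub>m 1 \<in> pauli_basis 0" unfolding pauli_basis_def by (auto simp: pstring_mat_Nil)
  thus ?case using skew_hermitian_1[of M] 0 by (metis power_0 real_span_mat.gen real_span_mat.smult)
next
  case (Suc m)
  let ?K = "2 ^ m :: nat"
  have M: "M \<in> skew_hermitian (2 * ?K)" using Suc.prems by simp
  have component: "kron (pauli_mat p) (pauli_component p ?K M) \<in> real_span_mat (2 * ?K) (pauli_basis (Suc m))"
    for p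
    by (rule kron_real_span_mat[OF pauli_mat_carrier pauli_basis_carrier kron_pauli_basis
      Suc.IH[OF pauli_component_skew_hermitian[OF M]]])
  have "M \<in> real_span_mat (2 * ?K) (pauli_basis (Suc m))"
    using M unfolding skew_hermitian_def
    by (subst pauli_decomposition) (auto intro!: real_span_mat.add component)
  thus ?case by simp
qed

lemma su_in_traceless_pauli_span:
  "M \<in> su (2 ^ m) \<Longrightarrow> M \<in> real_span_mat (2 ^ m) (traceless_pauli_basis m)"
proof (induction m arbitrary: M)
  case 0
  hence "M = 0\<^sub>m 1 1" unfolding su_def mtrace_def by (auto intro!: eq_matI)
  thus ?case using real_span_mat.zero by simp
next
  case (Suc m)
  let ?K = "2 ^ m :: nat"
  have M: "M \<in> skew_hermitian (2 * ?K)" "mtrace M = 0"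
    using Suc.prems unfolding su_iff_skew_hermitian by auto
  hence Mc: "M \<in> carrier_mat (2 * ?K) (2 * ?K)" unfolding skew_hermitian_def by auto
  have "pauli_component PI ?K M \<in> su ?K"
    using pauli_component_skew_hermitian[OF M(1)] mtrace_pauli_component_PI[OF Mc] M(2)
    unfolding su_iff_skew_hermitian by simp
  hence I: "kron (pauli_mat PI) (pauli_component PI ?K M) \<in> real_span_mat (2 * ?K) (traceless_pauli_basis (Suc m))"
    by (rule kron_real_span_mat[OF pauli_mat_carrier traceless_pauli_basis_carrier
      kron_traceless_pauli_basis Suc.IH])
  have XYZ: "kron (pauli_mat p) (pauli_component p ?K M) \<in> real_span_mat (2 * ?K) (traceless_pauli_basis (Suc m))"
    if "p \<noteq> PI" for p
    by (rule kron_real_span_mat[OF pauli_mat_carrier pauli_basis_carrier kron_non_PI_pauli_basis[OF that]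
      skew_hermitian_in_pauli_span[OF pauli_component_skew_hermitian[OF M(1)]]])
  have "M \<in> real_span_mat (2 * ?K) (traceless_pauli_basis (Suc m))"
    by (subst pauli_decomposition[OF Mc]) (intro real_span_mat.add I XYZ; simp)
  thus ?case by simp
qed

section \<open>Restriction to the eigenspaces of X_1\<close>

definition x_block_form :: "nat \<Rightarrow> complex mat \<Rightarrow> bool" where
  "x_block_form K A \<longleftrightarrow> A \<in> carrier_mat (2 * K) (2 * K) \<and>
     (\<forall>i<K. \<forall>j<K. A $$ (i + K, j + K) = A $$ (i, j) \<and> A $$ (i + K, j) = A $$ (i, j + K))"

text \<open>
  For A = [[P, Q], [Q, P]] (that is, x_block_form K A), the matrices P + Q and P - Q are the
  restrictions of A to the eigenspaces of X \<otimes> 1 for the eigenvalues 1 and -1.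
\<close>

definition eigen_block :: "complex \<Rightarrow> nat \<Rightarrow> complex mat \<Rightarrow> complex mat" where
  "eigen_block s K A = mat K K (\<lambda>(i,j). A $$ (i, j) + s * A $$ (i, j + K))"

lemma dim_eigen_block [simp]: "dim_row (eigen_block s K A) = K" "dim_col (eigen_block s K A) = K"
  by (simp_all add: eigen_block_def)

lemma index_eigen_block:
  "i < K \<Longrightarrow> j < K \<Longrightarrow> eigen_block s K A $$ (i,j) = A $$ (i, j) + s * A $$ (i, j + K)"
  by (simp add: eigen_block_def)

lemma x_block_form_carrier: "x_block_form K A \<Longrightarrow> A \<in> carrier_mat (2 * K) (2 * K)"
  by (simp add: x_block_form_def)

lemma eigen_block_add:
  "A \<in> carrier_mat (2 * K) (2 * K) \<Longrightarrow> B \<in> carrier_mat (2 * K) (2 * K) \<Longrightarrow>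
   eigen_block s K (A + B) = eigen_block s K A + eigen_block s K B"
  by (auto intro!: eq_matI simp: index_eigen_block algebra_simps)

lemma eigen_block_diff:
  "A \<in> carrier_mat (2 * K) (2 * K) \<Longrightarrow> B \<in> carrier_mat (2 * K) (2 * K) \<Longrightarrow>
   eigen_block s K (A - B) = eigen_block s K A - eigen_block s K B"
  by (auto intro!: eq_matI simp: index_eigen_block algebra_simps)

lemma eigen_block_smult:
  "A \<in> carrier_mat (2 * K) (2 * K) \<Longrightarrow> eigen_block s K (c \<cdot>\<^sub>m A) = c \<cdot>\<^sub>m eigen_block s K A"
  by (auto intro!: eq_matI simp: index_eigen_block algebra_simps)

lemma index_mult_x_block_form:
  assumes A: "x_block_form K A" and B: "x_block_form K B" and i: "i < K" and j: "j < K"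
  shows "(A * B) $$ (i, j) = (\<Sum>k = 0..<K. A $$ (i, k) * B $$ (k, j) + A $$ (i, k + K) * B $$ (k, j + K))"
    and "(A * B) $$ (i, j + K) = (\<Sum>k = 0..<K. A $$ (i, k) * B $$ (k, j + K) + A $$ (i, k + K) * B $$ (k, j))"
proof -
  have Ac: "A \<in> carrier_mat (2 * K) (2 * K)" and Bc: "B \<in> carrier_mat (2 * K) (2 * K)"
    using A B by (simp_all add: x_block_form_def)
  have B_lower: "B $$ (k + K, j) = B $$ (k, j + K)" "B $$ (k + K, j + K) = B $$ (k, j)" if "k < K" for k
    using B that j unfolding x_block_form_def by auto
  have ij: "i < 2 * K" "j < 2 * K" "j + K < 2 * K" using i j by auto
  show "(A * B) $$ (i, j) = (\<Sum>k = 0..<K. A $$ (i, k) * B $$ (k, j) + A $$ (i, k + K) * B $$ (k, j + K))"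
    unfolding index_mult_mat_sum[OF Ac Bc ij(1,2)] sum_upt_double sum.distrib[symmetric]
    by (rule sum.cong) (auto simp: B_lower)
  show "(A * B) $$ (i, j + K) = (\<Sum>k = 0..<K. A $$ (i, k) * B $$ (k, j + K) + A $$ (i, k + K) * B $$ (k, j))"
    unfolding index_mult_mat_sum[OF Ac Bc ij(1,3)] sum_upt_double sum.distrib[symmetric]
    by (rule sum.cong) (auto simp: B_lower)
qed

lemma eigen_block_mult:
  assumes s: "s * s = 1" and A: "x_block_form K A" and B: "x_block_form K B"
  shows "eigen_block s K (A * B) = eigen_block s K A * eigen_block s K B"
proof (rule eq_matI)
  fix i j assume "i < dim_row (eigen_block s K A * eigen_block s K B)"
    and "j < dim_col (eigen_block s K A * eigen_block s K B)"
  hence i: "i < K" and j: "j < K" by simp_all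
  have expand: "(a + s * b) * (c + s * d) = (a * c + b * d) + s * (a * d + b * c)" for a b c d
  proof -
    have "(a + s * b) * (c + s * d) = (a * c + (s * s) * (b * d)) + s * (a * d + b * c)"
      by (simp add: algebra_simps)
    thus ?thesis using s by simp
  qed
  have EA: "eigen_block s K A \<in> carrier_mat K K" and EB: "eigen_block s K B \<in> carrier_mat K K"
    by (simp_all add: carrier_matI)
  have "(eigen_block s K A * eigen_block s K B) $$ (i, j)
      = (\<Sum>k = 0..<K. (A $$ (i, k) + s * A $$ (i, k + K)) * (B $$ (k, j) + s * B $$ (k, j + K)))"
    unfolding index_mult_mat_sum[OF EA EB i j] using i j by (intro sum.cong) (simp_all add: index_eigen_block)
  also have "\<dots> = (A * B) $$ (i, j) + s * (A * B) $$ (i, j + K)"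
    unfolding index_mult_x_block_form[OF A B i j] expand
    by (simp add: sum.distrib sum_distrib_left distrib_left)
  also have "\<dots> = eigen_block s K (A * B) $$ (i, j)" using i j by (simp add: index_eigen_block)
  finally show "eigen_block s K (A * B) $$ (i, j) = (eigen_block s K A * eigen_block s K B) $$ (i, j)" ..
qed simp_all

lemma eigen_block_comm:
  assumes "s * s = 1" and A: "x_block_form K A" and B: "x_block_form K B"
  shows "eigen_block s K (comm A B) = comm (eigen_block s K A) (eigen_block s K B)"
proof -
  have "A * B \<in> carrier_mat (2 * K) (2 * K)" "B * A \<in> carrier_mat (2 * K) (2 * K)"
    using x_block_form_carrier[OF A] x_block_form_carrier[OF B] by auto
  thus ?thesis unfolding comm_def by (simp add: eigen_block_diff eigen_block_mult assms)
qed

lemma x_block_form_eqI: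
  assumes A: "x_block_form K A" and B: "x_block_form K B"
    and plus: "eigen_block 1 K A = eigen_block 1 K B" and minus: "eigen_block (-1) K A = eigen_block (-1) K B"
  shows "A = B"
proof -
  have upper: "A $$ (i, j) = B $$ (i, j) \<and> A $$ (i, j + K) = B $$ (i, j + K)" if "i < K" "j < K" for i j
  proof -
    have "A $$ (i, j) + A $$ (i, j + K) = B $$ (i, j) + B $$ (i, j + K)"
      "A $$ (i, j) - A $$ (i, j + K) = B $$ (i, j) - B $$ (i, j + K)"
      using that arg_cong[OF plus, of "\<lambda>M. M $$ (i, j)"] arg_cong[OF minus, of "\<lambda>M. M $$ (i, j)"]
      by (simp_all add: index_eigen_block)
    thus ?thesis by (rule sum_diff_eq_imp_eq)
  qed
  show ?thesis
  proof (rule eq_matI)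
    fix r c assume "r < dim_row B" "c < dim_col B"
    hence r: "r < 2 * K" and c: "c < 2 * K" using B by (auto dest: x_block_form_carrier)
    show "A $$ (r, c) = B $$ (r, c)"
      using A B upper by (cases rule: lower_upper_index_cases[OF r]; cases rule: lower_upper_index_cases[OF c])
        (auto simp: x_block_form_def)
  qed (use x_block_form_carrier[OF A] x_block_form_carrier[OF B] in auto)
qed

section \<open>The isomorphism with su \<oplus> su\<close>

lemma a15_strings_Suc_cases:
  assumes "ps \<in> a15_strings (Suc m)"
  obtains a ps' where "ps = a # ps'" "a \<in> {PI, PX}" "length ps' = m" "ps' \<noteq> replicate m PI"
  using assms unfolding a15_strings_def by (cases ps) auto

lemma kron_I_or_X_traceless_pauli_basis:
  "a \<in> {PI, PX} \<Longrightarrow> kron (pauli_mat a) ` traceless_pauli_basis m \<subseteq> a15_basis (Suc m)"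
  unfolding traceless_pauli_basis_def a15_basis_def a15_strings_def
  by (auto simp: kron_pauli_pstring)

lemma pstring_mat_I_or_X_block:
  assumes a: "a \<in> {PI, PX}"
  shows "x_block_form (2 ^ length ps) (\<i> \<cdot>\<^sub>m pstring_mat (a # ps))"
    and "eigen_block s (2 ^ length ps) (\<i> \<cdot>\<^sub>m pstring_mat (a # ps))
         = (if a = PI then 1 else s) \<cdot>\<^sub>m (\<i> \<cdot>\<^sub>m pstring_mat ps)"
proof -
  let ?K = "2 ^ length ps :: nat"
  have entry: "pstring_mat (a # ps) $$ (r, c)
      = pauli_mat a $$ (r div ?K, c div ?K) * pstring_mat ps $$ (r mod ?K, c mod ?K)"
    if "r < 2 * ?K" "c < 2 * ?K" for r c
    using that by (simp add: pstring_mat_Cons index_kron)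
  have "i < ?K \<Longrightarrow> i < 2 * ?K" "i < ?K \<Longrightarrow> i + ?K < 2 * ?K" for i by auto
  note lt = this
  show "x_block_form ?K (\<i> \<cdot>\<^sub>m pstring_mat (a # ps))"
    using a pstring_mat_carrier[of "a # ps"]
    by (auto simp: x_block_form_def entry lt pauli_mat_def)
  show "eigen_block s ?K (\<i> \<cdot>\<^sub>m pstring_mat (a # ps))
      = (if a = PI then 1 else s) \<cdot>\<^sub>m (\<i> \<cdot>\<^sub>m pstring_mat ps)"
    using a by (intro eq_matI) (auto simp: index_eigen_block entry lt pauli_mat_def)
qed

lemma x_block_form_a15_span:
  "A \<in> real_span_mat (2 ^ Suc m) (a15_basis (Suc m)) \<Longrightarrow> x_block_form (2 ^ m) A"
proof (induction rule: real_span_mat.induct)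
  case (gen A)
  then obtain ps where "ps \<in> a15_strings (Suc m)" "A = \<i> \<cdot>\<^sub>m pstring_mat ps"
    unfolding a15_basis_def by blast
  thus ?case by (cases rule: a15_strings_Suc_cases) (auto simp: pstring_mat_I_or_X_block)
qed (auto simp: x_block_form_def)

lemma eigen_block_a15_span_in_su:
  assumes s: "s \<in> {1, -1}"
  shows "A \<in> real_span_mat (2 ^ Suc m) (a15_basis (Suc m)) \<Longrightarrow> eigen_block s (2 ^ m) A \<in> su (2 ^ m)"
proof (induction rule: real_span_mat.induct)
  case (gen A)
  then obtain ps where "ps \<in> a15_strings (Suc m)" "A = \<i> \<cdot>\<^sub>m pstring_mat ps"
    unfolding a15_basis_def by blast
  then obtain a ps' where ps: "A = \<i> \<cdot>\<^sub>m pstring_mat (a # ps')" "a \<in> {PI, PX}" "length ps' = m"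
    and "ps' \<noteq> replicate m PI"
    by (cases rule: a15_strings_Suc_cases) auto
  hence P: "\<i> \<cdot>\<^sub>m pstring_mat ps' \<in> su (2 ^ m)" using pstring_mat_in_su by blast
  have "(if a = PI then 1 else s) = complex_of_real (if a = PI \<or> s = 1 then 1 else -1)" using s by auto
  hence "eigen_block s (2 ^ m) A
      = complex_of_real (if a = PI \<or> s = 1 then 1 else -1) \<cdot>\<^sub>m (\<i> \<cdot>\<^sub>m pstring_mat ps')"
    using pstring_mat_I_or_X_block(2)[OF ps(2), of s ps'] ps by simp
  thus ?case using su_smult[OF P] by simp
next
  case zero
  have "eigen_block s (2 ^ m) (0\<^sub>m (2 ^ Suc m) (2 ^ Suc m)) = 0\<^sub>m (2 ^ m) (2 ^ m)"
    by (intro eq_matI) (auto simp: index_eigen_block)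
  thus ?case using su_zero by simp
next
  case (add A B)
  hence "A \<in> carrier_mat (2 * 2 ^ m) (2 * 2 ^ m)" "B \<in> carrier_mat (2 * 2 ^ m) (2 * 2 ^ m)"
    using real_span_mat_carrier[OF a15_basis_carrier[of "Suc m"]] by auto
  thus ?case using add by (simp add: eigen_block_add su_add)
next
  case (smult A r)
  hence "A \<in> carrier_mat (2 * 2 ^ m) (2 * 2 ^ m)" using real_span_mat_carrier[OF a15_basis_carrier[of "Suc m"]] by auto
  thus ?case using smult by (simp add: eigen_block_smult su_smult)
qed

lemma eigen_blocks_surjective:
  assumes U: "U \<in> su (2 ^ m)" and V: "V \<in> su (2 ^ m)"
  obtains A where "A \<in> real_span_mat (2 ^ Suc m) (a15_basis (Suc m))"
    and "eigen_block 1 (2 ^ m) A = U" and "eigen_block (-1) (2 ^ m) A = V"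
proof -
  let ?K = "2 ^ m :: nat"
  define W1 where "W1 = complex_of_real (1/2) \<cdot>\<^sub>m (U + V)"
  define W2 where "W2 = complex_of_real (1/2) \<cdot>\<^sub>m (U + complex_of_real (-1) \<cdot>\<^sub>m V)"
  define A where "A = kron (pauli_mat PI) W1 + kron (pauli_mat PX) W2"
  have Uc: "U \<in> carrier_mat ?K ?K" and Vc: "V \<in> carrier_mat ?K ?K" using U V unfolding su_def by auto
  have "W1 \<in> real_span_mat ?K (traceless_pauli_basis m)" "W2 \<in> real_span_mat ?K (traceless_pauli_basis m)"
    unfolding W1_def W2_def using su_in_traceless_pauli_span[OF U] su_in_traceless_pauli_span[OF V]
    by (intro real_span_mat.smult real_span_mat.add; simp)+
  hence "A \<in> real_span_mat (2 * ?K) (a15_basis (Suc m))"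
    unfolding A_def using kron_I_or_X_traceless_pauli_basis
    by (intro real_span_mat.add kron_real_span_mat[OF pauli_mat_carrier traceless_pauli_basis_carrier]) auto
  moreover have "eigen_block s ?K A = W1 + s \<cdot>\<^sub>m W2" for s
    using Uc Vc unfolding A_def W1_def W2_def
    by (intro eq_matI) (auto simp: index_eigen_block index_kron pauli_mat_def)
  hence "eigen_block 1 ?K A = U" "eigen_block (-1) ?K A = V"
    using Uc Vc unfolding W1_def W2_def by (auto intro!: eq_matI simp: field_simps)
  ultimately show ?thesis using that by simp
qed

theorem a15_span_iso_su_su:
  "lie_iso_sum (\<lambda>A. (eigen_block 1 (2 ^ m) A, eigen_block (-1) (2 ^ m) A))
     (real_span_mat (2 ^ Suc m) (a15_basis (Suc m))) (su (2 ^ m)) (su (2 ^ m))"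
  (is "lie_iso_sum ?f ?L _ _")
proof -
  have blocks: "x_block_form (2 ^ m) A" if "A \<in> ?L" for A
    using that by (rule x_block_form_a15_span)
  have carrier: "A \<in> carrier_mat (2 * 2 ^ m) (2 * 2 ^ m)" if "A \<in> ?L" for A
    using x_block_form_carrier[OF blocks[OF that]] .
  have "inj_on ?f ?L"
  proof (rule inj_onI)
    fix A B assume "A \<in> ?L" "B \<in> ?L" "?f A = ?f B"
    thus "A = B" using x_block_form_eqI[OF blocks blocks] by simp
  qed
  moreover have "?f ` ?L = su (2 ^ m) \<times> su (2 ^ m)"
  proof
    show "?f ` ?L \<subseteq> su (2 ^ m) \<times> su (2 ^ m)" using eigen_block_a15_span_in_su by auto
    show "su (2 ^ m) \<times> su (2 ^ m) \<subseteq> ?f ` ?L"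
    proof safe
      fix U V assume "U \<in> su (2 ^ m)" "V \<in> su (2 ^ m)"
      then obtain A where "A \<in> ?L" "?f A = (U, V)" using eigen_blocks_surjective by metis
      thus "(U, V) \<in> ?f ` ?L" by force
    qed
  qed
  ultimately show ?thesis
    unfolding lie_iso_sum_def bij_betw_def
    by (simp add: carrier eigen_block_add eigen_block_smult eigen_block_comm blocks)
qed

theorem mainTheorem17:
  fixes n :: nat
  assumes "n \<ge> 3"
  shows "a15 n = real_span_mat (2^n)
           {\<i> \<cdot>\<^sub>m pstring_mat ps | ps. length ps = n \<and> hd ps \<in> {PI, PX}
               \<and> ps \<noteq> replicate n PI \<and> ps \<noteq> PX # replicate (n - 1) PI}
         \<and> (\<exists>f. lie_iso_sum f (a15 n) (su (2^(n-1))) (su (2^(n-1))))"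
proof
  have span: "a15 n = real_span_mat (2 ^ n) (a15_basis n)"
    using assms by (intro a15_eq_real_span) simp
  thus "a15 n = real_span_mat (2^n)
           {\<i> \<cdot>\<^sub>m pstring_mat ps | ps. length ps = n \<and> hd ps \<in> {PI, PX}
               \<and> ps \<noteq> replicate n PI \<and> ps \<noteq> PX # replicate (n - 1) PI}"
    unfolding a15_basis_def a15_strings_def by simp
  obtain m where "n = Suc m" using assms by (cases n) auto
  thus "\<exists>f. lie_iso_sum f (a15 n) (su (2^(n-1))) (su (2^(n-1)))"
    using a15_span_iso_su_su[of m] span by auto
qed

end
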